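(* Let $d\ge2$ be an integer and $R>0$. There exists $R'>0$ depending only on $R$ (and $d$) such that the following holds: whenever $D_1,\dots,D_d$ are real numbers with $|D_i|\le R$ for all $i$, $D=\sum_iD_i$, and $(\lambda,L)\in\mathbb{R}\times C^1([0,1];\mathbb{R}^d)$ satisfies $$(d-1)\lambda=\sum_{i=1}^dL_i(0)^2-\Big(\sum_{i=1}^dL_i(0)\Big)^2,\qquad L_i'=-\Big(\sum_{k=1}^dL_k\Big)L_i-\lambda\ \text{ on }[0,1],\qquad\int_0^1L_i=D_i$$ for $i=1,\dots,d$, then $|\lambda|<R'$ and $|L_i(r)|<R'$ for all $r\in[0,1]$ and $i=1,\dots,d$. *)

theory Defs
  imports "HOL-Analysis.Analysis"
begin

end

theory Submission
  imports Defs
begin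

(*
  Let n be the number of components, S the sum of the L_i, and w_i = L_i - S/n.  Then
  S' = -S^2 - n lam and w_i' = -S w_i, so each w_i keeps its sign and the integral of |w_i|
  is |D_i - D/n| <= 2R.  The defect sum L_i^2 - S^2 - (n-1) lam obeys a linear homogeneous
  equation and vanishes at 0 by hypothesis, hence everywhere; equivalently
  sum w_i^2 = (n-1)/n (S^2 + n lam), so in particular S^2 + n lam >= 0.
  If lam >= 0, integrating sum |w_i| >= sqrt ((S^2 + n lam)/2) bounds both the integral of |S|
  and lam.  If lam < 0, then S^2 >= -n lam > 0, so S has constant sign, the integral of |S|
  equals |D|, and it dominates sqrt (-n lam).  With C = 4nR this gives integral |S| <= C and
  n |lam| <= C^2.  Finally the derivative of ln (C^2 + 1 + S^2) is at most 2|S| in absolute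
  value, which bounds S from its value at a point where |S| is minimal, and
  sum L_i^2 = S^2 + (n-1) lam bounds every L_i.
*)

lemma sum_power2_le_power2_sum:
  fixes a :: "'i \<Rightarrow> real"
  assumes "finite A" and "\<And>i. i \<in> A \<Longrightarrow> 0 \<le> a i"
  shows "(\<Sum>i\<in>A. (a i)\<^sup>2) \<le> (\<Sum>i\<in>A. a i)\<^sup>2"
proof -
  have "(\<Sum>i\<in>A. (a i)\<^sup>2) \<le> (\<Sum>i\<in>A. a i * (\<Sum>j\<in>A. a j))"
  proof (rule sum_mono)
    fix i assume i: "i \<in> A"
    have "a i \<le> (\<Sum>j\<in>A. a j)" using assms i by (intro member_le_sum) auto
    then show "(a i)\<^sup>2 \<le> a i * (\<Sum>j\<in>A. a j)"
      using assms(2)[OF i] by (simp add: power2_eq_square mult_left_mono)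
  qed
  also have "\<dots> = (\<Sum>i\<in>A. a i)\<^sup>2" by (simp add: power2_eq_square sum_distrib_right)
  finally show ?thesis .
qed

lemma sum_power2_diff_const:
  fixes f :: "'i \<Rightarrow> real"
  shows "(\<Sum>k\<in>A. (f k - c)\<^sup>2) = (\<Sum>k\<in>A. (f k)\<^sup>2) - 2 * c * (\<Sum>k\<in>A. f k) + real (card A) * c\<^sup>2"
  by (simp add: power2_diff sum.distrib sum_subtractf algebra_simps
      flip: sum_distrib_left sum_distrib_right)

lemma has_integral_abs_of_constant_sign:
  fixes f :: "'a::euclidean_space \<Rightarrow> real"
  assumes f: "(f has_integral I) S" and sign: "(\<forall>x\<in>S. 0 \<le> f x) \<or> (\<forall>x\<in>S. f x \<le> 0)"
  shows "((\<lambda>x. \<bar>f x\<bar>) has_integral \<bar>I\<bar>) S"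
  using sign
proof
  assume pos: "\<forall>x\<in>S. 0 \<le> f x"
  have "0 \<le> I" using has_integral_nonneg[OF f] pos by blast
  then show ?thesis using f pos by (subst has_integral_cong[of _ _ f]) auto
next
  assume neg: "\<forall>x\<in>S. f x \<le> 0"
  have "0 \<le> - I" using has_integral_nonneg[OF has_integral_neg[OF f]] neg by auto
  then show ?thesis using has_integral_neg[OF f] neg
    by (subst has_integral_cong[of _ _ "\<lambda>x. - f x"]) auto
qed

lemma continuous_nonvanishing_imp_constant_sign:
  fixes f :: "real \<Rightarrow> real"
  assumes cont: "continuous_on {a..b} f" and nz: "\<And>x. x \<in> {a..b} \<Longrightarrow> f x \<noteq> 0"
  shows "(\<forall>x\<in>{a..b}. 0 < f x) \<or> (\<forall>x\<in>{a..b}. f x < 0)"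
proof (rule ccontr)
  assume "\<not> ?thesis"
  then obtain u v where u: "u \<in> {a..b}" "f u \<le> 0" and v: "v \<in> {a..b}" "0 \<le> f v"
    by force
  have "\<exists>x\<in>{a..b}. f x = 0"
  proof (cases "u \<le> v")
    case True
    have "continuous_on {u..v} f" by (rule continuous_on_subset[OF cont]) (use u v in auto)
    then obtain x where "u \<le> x" "x \<le> v" "f x = 0" using IVT'[of f u 0 v] u v True by auto
    then show ?thesis using u v by auto
  next
    case False
    have "continuous_on {v..u} f" by (rule continuous_on_subset[OF cont]) (use u v in auto)
    then obtain x where "v \<le> x" "x \<le> u" "f x = 0" using IVT2'[of f u 0 v] u v False by auto
    then show ?thesis using u v by auto
  qed
  then show False using nz by blast
qed

lemma integrating_factor_invariant:
  fixes f g :: "real \<Rightarrow> real"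
  assumes g: "continuous_on {a..b} g"
    and f: "\<And>x. x \<in> {a..b} \<Longrightarrow> (f has_real_derivative - g x * f x) (at x within {a..b})"
    and x: "x \<in> {a..b}"
  shows "f x * exp (integral {a..x} g) = f a"
proof -
  define E where "E y = exp (integral {a..y} g)" for y
  have "((\<lambda>y. f y * E y) has_real_derivative 0) (at y within {a..b})" if y: "y \<in> {a..b}" for y
  proof -
    have "(E has_real_derivative E y * g y) (at y within {a..b})"
      unfolding E_def using DERIV_chain2[OF DERIV_exp integral_has_real_derivative[OF g y]] by simp
    from DERIV_mult[OF f[OF y] this] show ?thesis by (simp add: algebra_simps)
  qed
  then obtain c where "\<forall>y\<in>{a..b}. f y * E y = c"
    using has_field_derivative_zero_constant[of "{a..b}"] by blast
  moreover have "a \<in> {a..b}" using x by auto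
  ultimately have "f x * E x = f a * E a" using x by simp
  then show ?thesis by (simp add: E_def)
qed

lemma integrating_factor_sgn:
  fixes f g :: "real \<Rightarrow> real"
  assumes "continuous_on {a..b} g"
    and "\<And>x. x \<in> {a..b} \<Longrightarrow> (f has_real_derivative - g x * f x) (at x within {a..b})"
    and "x \<in> {a..b}"
  shows "sgn (f x) = sgn (f a)"
  using integrating_factor_invariant[OF assms] by (metis exp_gt_zero sgn_mult sgn_pos mult.right_neutral)

lemma has_integral_ge_const:
  fixes f :: "real \<Rightarrow> real"
  assumes "(f has_integral I) {a..b}" "a \<le> b" "\<And>x. x \<in> {a..b} \<Longrightarrow> c \<le> f x"
  shows "(b - a) * c \<le> I"
  using has_integral_le[OF has_integral_const_real assms(1)] assms(2,3) by simp

lemma diff_le_integral_of_abs_deriv_le: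
  fixes f f' g :: "real \<Rightarrow> real"
  assumes f: "\<And>x. x \<in> {a..b} \<Longrightarrow> (f has_real_derivative f' x) (at x within {a..b})"
    and le: "\<And>x. x \<in> {a..b} \<Longrightarrow> \<bar>f' x\<bar> \<le> g x"
    and g: "continuous_on {a..b} g"
    and x: "x \<in> {a..b}" and y: "y \<in> {a..b}"
  shows "f x - f y \<le> integral {a..b} g"
proof -
  define u v where "u = min x y" and "v = max x y"
  have sub: "{u..v} \<subseteq> {a..b}" using x y by (auto simp: u_def v_def)
  have F: "(f' has_integral (f v - f u)) {u..v}"
  proof (rule fundamental_theorem_of_calculus)
    fix t assume "t \<in> {u..v}"
    with sub show "(f has_vector_derivative f' t) (at t within {u..v})"
      using f has_vector_derivative_within_subset
      by (metis has_real_derivative_iff_has_vector_derivative subsetD)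
  qed (simp add: u_def v_def)
  have gi: "(g has_integral integral {u..v} g) {u..v}"
    using integrable_continuous_interval[OF continuous_on_subset[OF g sub]] by blast
  have "f v - f u \<le> integral {u..v} g"
    by (rule has_integral_le[OF F gi]) (use le sub in \<open>force simp: abs_le_iff\<close>)
  moreover have "- (f v - f u) \<le> integral {u..v} g"
    by (rule has_integral_le[OF has_integral_neg[OF F] gi]) (use le sub in \<open>force simp: abs_le_iff\<close>)
  moreover have "integral {u..v} g \<le> integral {a..b} g"
    using sub order_trans[OF abs_ge_zero le]
    by (intro integral_subset_le integrable_continuous_interval continuous_on_subset[OF g]) auto
  ultimately show ?thesis by (auto simp: u_def v_def min_def max_def split: if_splits)
qed

locale riccati_system =
  fixes A :: "'i set" and lam :: real and L :: "'i \<Rightarrow> real \<Rightarrow> real"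
  assumes finite_A: "finite A" and card_A_ge_2: "2 \<le> card A"
    and L_deriv: "\<And>i x. i \<in> A \<Longrightarrow> x \<in> {0..1} \<Longrightarrow>
      (L i has_real_derivative - (\<Sum>k\<in>A. L k x) * L i x - lam) (at x within {0..1})"
begin

abbreviation n :: real where "n \<equiv> real (card A)"

lemma n_ge_2: "2 \<le> n"
  using card_A_ge_2 by simp

definition S :: "real \<Rightarrow> real" where "S x = (\<Sum>k\<in>A. L k x)"

definition w :: "'i \<Rightarrow> real \<Rightarrow> real" where "w i x = L i x - S x / n"

definition constraint_defect :: "real \<Rightarrow> real" where
  "constraint_defect x = (\<Sum>k\<in>A. (L k x)\<^sup>2) - (S x)\<^sup>2 - (n - 1) * lam"

lemma L_deriv_S:
  "i \<in> A \<Longrightarrow> x \<in> {0..1} \<Longrightarrow> (L i has_real_derivative - S x * L i x - lam) (at x within {0..1})"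
  using L_deriv by (simp add: S_def)

lemma S_deriv:
  assumes "x \<in> {0..1}"
  shows "(S has_real_derivative - (S x)\<^sup>2 - n * lam) (at x within {0..1})"
proof -
  have "((\<lambda>x. \<Sum>k\<in>A. L k x) has_real_derivative (\<Sum>k\<in>A. - S x * L k x - lam)) (at x within {0..1})"
    by (intro DERIV_sum L_deriv_S assms)
  then have "(S has_real_derivative (\<Sum>k\<in>A. - S x * L k x - lam)) (at x within {0..1})"
    by (simp only: S_def[abs_def, symmetric])
  moreover have "(\<Sum>k\<in>A. - S x * L k x - lam) = - (S x)\<^sup>2 - n * lam"
    by (simp add: sum_subtractf sum_negf power2_eq_square flip: sum_distrib_left S_def)
  ultimately show ?thesis by (rule DERIV_cong)
qed

lemma continuous_on_S: "continuous_on {0..1} S"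
  using S_deriv by (rule DERIV_continuous_on)

lemma w_deriv:
  assumes "i \<in> A" "x \<in> {0..1}"
  shows "(w i has_real_derivative - S x * w i x) (at x within {0..1})"
proof -
  have "w i = (\<lambda>x. L i x - S x / n)"
    by (simp add: fun_eq_iff w_def)
  then have "(w i has_real_derivative (- S x * L i x - lam) - (- (S x)\<^sup>2 - n * lam) / n) (at x within {0..1})"
    by (simp only:) (intro DERIV_diff DERIV_cdivide L_deriv_S S_deriv assms)
  moreover have "(- S x * L i x - lam) - (- (S x)\<^sup>2 - n * lam) / n = - S x * w i x"
    using n_ge_2 by (simp add: w_def field_simps power2_eq_square)
  ultimately show ?thesis by (rule DERIV_cong)
qed

lemma sgn_w:
  assumes "i \<in> A" "x \<in> {0..1}"
  shows "sgn (w i x) = sgn (w i 0)"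
  by (rule integrating_factor_sgn[OF continuous_on_S w_deriv[OF assms(1)] assms(2)])

lemma constraint_defect_deriv:
  assumes x: "x \<in> {0..1}"
  shows "(constraint_defect has_real_derivative - (2 * S x) * constraint_defect x) (at x within {0..1})"
proof -
  have "((\<lambda>x. (L k x)\<^sup>2) has_real_derivative 2 * L k x * (- S x * L k x - lam)) (at x within {0..1})"
    if "k \<in> A" for k
    using DERIV_power[OF L_deriv_S[OF that x], of 2] by (simp add: ac_simps)
  then have "((\<lambda>x. \<Sum>k\<in>A. (L k x)\<^sup>2) has_real_derivative
      (\<Sum>k\<in>A. 2 * L k x * (- S x * L k x - lam))) (at x within {0..1})"
    by (intro DERIV_sum)
  moreover have "((\<lambda>x. (S x)\<^sup>2) has_real_derivative 2 * S x * (- (S x)\<^sup>2 - n * lam)) (at x within {0..1})"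
    using DERIV_power[OF S_deriv[OF x], of 2] by (simp add: ac_simps)
  ultimately have deriv: "(constraint_defect has_real_derivative
      (\<Sum>k\<in>A. 2 * L k x * (- S x * L k x - lam)) - 2 * S x * (- (S x)\<^sup>2 - n * lam) - 0)
      (at x within {0..1})"
    unfolding constraint_defect_def[abs_def] by (intro DERIV_diff DERIV_const)
  have "(\<Sum>k\<in>A. 2 * L k x * (- S x * L k x - lam))
      = (\<Sum>k\<in>A. (- 2 * S x) * (L k x)\<^sup>2 + (- 2 * lam) * L k x)"
    by (intro sum.cong) (simp_all add: power2_eq_square algebra_simps)
  also have "\<dots> = - 2 * S x * (\<Sum>k\<in>A. (L k x)\<^sup>2) - 2 * lam * S x"
    by (simp add: sum_subtractf sum_negf flip: sum_distrib_left S_def)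
  finally have "(\<Sum>k\<in>A. 2 * L k x * (- S x * L k x - lam)) - 2 * S x * (- (S x)\<^sup>2 - n * lam) - 0
      = - (2 * S x) * constraint_defect x"
    unfolding constraint_defect_def by (simp add: algebra_simps power2_eq_square)
  with deriv show ?thesis by (rule DERIV_cong)
qed

lemma constraint_defect_eq_0:
  assumes "constraint_defect 0 = 0" "x \<in> {0..1}"
  shows "constraint_defect x = 0"
proof -
  have "continuous_on {0..1} (\<lambda>x. 2 * S x)"
    by (intro continuous_on_mult_left continuous_on_S)
  from integrating_factor_sgn[OF this constraint_defect_deriv assms(2)]
  show ?thesis using assms(1) by (simp add: sgn_0_0)
qed

end

locale riccati_bvp = riccati_system A lam L
  for A :: "'i set" and lam :: real and L :: "'i \<Rightarrow> real \<Rightarrow> real" +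
  fixes D :: "'i \<Rightarrow> real" and R :: real
  assumes initial_constraint:
      "(real (card A) - 1) * lam = (\<Sum>i\<in>A. (L i 0)\<^sup>2) - (\<Sum>i\<in>A. L i 0)\<^sup>2"
    and L_integral: "\<And>i. i \<in> A \<Longrightarrow> (L i has_integral D i) {0..1}"
    and abs_D_le: "\<And>i. i \<in> A \<Longrightarrow> \<bar>D i\<bar> \<le> R"
begin

lemma R_nonneg: "0 \<le> R"
proof -
  have "A \<noteq> {}" using card_A_ge_2 by auto
  then obtain i where "i \<in> A" by blast
  then show ?thesis using abs_D_le[of i] by linarith
qed

lemma sum_power2_L_eq:
  assumes "x \<in> {0..1}"
  shows "(\<Sum>k\<in>A. (L k x)\<^sup>2) = (S x)\<^sup>2 + (n - 1) * lam"
proof -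
  have "constraint_defect 0 = 0"
    using initial_constraint by (simp add: constraint_defect_def S_def)
  from constraint_defect_eq_0[OF this assms] show ?thesis
    by (simp add: constraint_defect_def)
qed

lemma sum_power2_w_eq:
  assumes "x \<in> {0..1}"
  shows "(\<Sum>k\<in>A. (w k x)\<^sup>2) = (n - 1) / n * ((S x)\<^sup>2 + n * lam)"
proof -
  have "(\<Sum>k\<in>A. (w k x)\<^sup>2) = (\<Sum>k\<in>A. (L k x)\<^sup>2) - 2 * (S x / n) * S x + n * (S x / n)\<^sup>2"
    using sum_power2_diff_const[of "\<lambda>k. L k x" "S x / n" A] by (simp add: w_def flip: S_def)
  also have "\<dots> = (n - 1) / n * ((S x)\<^sup>2 + n * lam)"
    unfolding sum_power2_L_eq[OF assms] using n_ge_2 by (simp add: field_simps power2_eq_square)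
  finally show ?thesis .
qed

lemma energy_nonneg:
  assumes "x \<in> {0..1}"
  shows "0 \<le> (S x)\<^sup>2 + n * lam"
proof -
  have "0 \<le> (n - 1) / n * ((S x)\<^sup>2 + n * lam)"
    using sum_power2_w_eq[OF assms] by (metis sum_nonneg zero_le_power2)
  moreover have "0 < (n - 1) / n" using n_ge_2 by simp
  ultimately show ?thesis by (simp only: zero_le_mult_iff) linarith
qed

lemma S_has_integral: "(S has_integral (\<Sum>k\<in>A. D k)) {0..1}"
proof -
  have "((\<lambda>x. \<Sum>k\<in>A. L k x) has_integral (\<Sum>k\<in>A. D k)) {0..1}"
    by (intro has_integral_sum finite_A L_integral)
  then show ?thesis by (simp only: S_def[abs_def, symmetric])
qed

lemma abs_sum_D_le: "\<bar>\<Sum>k\<in>A. D k\<bar> \<le> n * R"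
proof -
  have "\<bar>\<Sum>k\<in>A. D k\<bar> \<le> (\<Sum>k\<in>A. R)"
    using sum_abs[of D A] sum_mono[of A "\<lambda>k. \<bar>D k\<bar>", OF abs_D_le] by linarith
  then show ?thesis by simp
qed

lemma abs_w_has_integral:
  assumes "i \<in> A"
  shows "((\<lambda>x. \<bar>w i x\<bar>) has_integral \<bar>D i - (\<Sum>k\<in>A. D k) / n\<bar>) {0..1}"
proof (rule has_integral_abs_of_constant_sign)
  have "((\<lambda>x. L i x - S x / n) has_integral D i - (\<Sum>k\<in>A. D k) / n) {0..1}"
    by (intro has_integral_diff has_integral_divide L_integral assms S_has_integral)
  then show "(w i has_integral D i - (\<Sum>k\<in>A. D k) / n) {0..1}"
    by (simp add: w_def[abs_def])
  show "(\<forall>x\<in>{0..1}. 0 \<le> w i x) \<or> (\<forall>x\<in>{0..1}. w i x \<le> 0)"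
  proof (cases "0 \<le> w i 0")
    case True
    then show ?thesis using sgn_w[OF assms] sgn_less by (metis not_le)
  next
    case False
    then show ?thesis using sgn_w[OF assms] sgn_le_0_iff by (metis nle_le)
  qed
qed

lemma sum_abs_w_has_integral_le:
  obtains I where "((\<lambda>x. \<Sum>i\<in>A. \<bar>w i x\<bar>) has_integral I) {0..1}" and "I \<le> 2 * n * R"
proof
  show "((\<lambda>x. \<Sum>i\<in>A. \<bar>w i x\<bar>) has_integral (\<Sum>i\<in>A. \<bar>D i - (\<Sum>k\<in>A. D k) / n\<bar>)) {0..1}"
    by (intro has_integral_sum finite_A abs_w_has_integral)
  have "\<bar>D i - (\<Sum>k\<in>A. D k) / n\<bar> \<le> 2 * R" if "i \<in> A" for i
  proof -
    have "\<bar>(\<Sum>k\<in>A. D k) / n\<bar> \<le> R"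
      using abs_sum_D_le n_ge_2 by (simp add: abs_divide divide_le_eq mult.commute)
    then show ?thesis using abs_D_le[OF that] by linarith
  qed
  then have "(\<Sum>i\<in>A. \<bar>D i - (\<Sum>k\<in>A. D k) / n\<bar>) \<le> (\<Sum>i\<in>A. 2 * R)"
    by (rule sum_mono)
  then show "(\<Sum>i\<in>A. \<bar>D i - (\<Sum>k\<in>A. D k) / n\<bar>) \<le> 2 * n * R" by simp
qed

lemma half_energy_le_power2_sum_abs_w:
  assumes "x \<in> {0..1}"
  shows "((S x)\<^sup>2 + n * lam) / 2 \<le> (\<Sum>i\<in>A. \<bar>w i x\<bar>)\<^sup>2"
proof -
  have "1 / 2 \<le> (n - 1) / n" using n_ge_2 by (simp add: field_simps)
  from mult_right_mono[OF this energy_nonneg[OF assms]]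
  have "((S x)\<^sup>2 + n * lam) / 2 \<le> (n - 1) / n * ((S x)\<^sup>2 + n * lam)" by simp
  also have "\<dots> = (\<Sum>i\<in>A. \<bar>w i x\<bar>\<^sup>2)" by (simp add: sum_power2_w_eq[OF assms])
  also have "\<dots> \<le> (\<Sum>i\<in>A. \<bar>w i x\<bar>)\<^sup>2" by (intro sum_power2_le_power2_sum finite_A) simp
  finally show ?thesis .
qed

lemma abs_S_has_integral:
  "((\<lambda>x. \<bar>S x\<bar>) has_integral integral {0..1} (\<lambda>x. \<bar>S x\<bar>)) {0..1}"
  by (intro integrable_integral integrable_continuous_interval continuous_on_rabs continuous_on_S)

lemma bounds_if_lam_nonneg:
  assumes "0 \<le> lam"
  shows "integral {0..1} (\<lambda>x. \<bar>S x\<bar>) \<le> 4 * n * R" and "n * lam \<le> (4 * n * R)\<^sup>2"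
proof -
  obtain I where I: "((\<lambda>x. \<Sum>i\<in>A. \<bar>w i x\<bar>) has_integral I) {0..1}" and I_le: "I \<le> 2 * n * R"
    by (rule sum_abs_w_has_integral_le)
  have twice_I: "((\<lambda>x. 2 * (\<Sum>i\<in>A. \<bar>w i x\<bar>)) has_integral 2 * I) {0..1}"
    by (rule has_integral_mult_right[OF I])
  have lam_part: "0 \<le> n * lam" using assms by simp
  have le_twice: "t \<le> 2 * (\<Sum>i\<in>A. \<bar>w i x\<bar>)"
    if "x \<in> {0..1}" "0 \<le> t" "t\<^sup>2 \<le> (S x)\<^sup>2 + n * lam" for t x
  proof (rule power2_le_imp_le)
    have "t\<^sup>2 \<le> 2 * (\<Sum>i\<in>A. \<bar>w i x\<bar>)\<^sup>2"
      using that(3) half_energy_le_power2_sum_abs_w[OF that(1)] by (simp add: field_simps)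
    also have "\<dots> \<le> (2 * (\<Sum>i\<in>A. \<bar>w i x\<bar>))\<^sup>2" by (simp add: power_mult_distrib)
    finally show "t\<^sup>2 \<le> (2 * (\<Sum>i\<in>A. \<bar>w i x\<bar>))\<^sup>2" .
  qed (simp add: sum_nonneg)
  have "integral {0..1} (\<lambda>x. \<bar>S x\<bar>) \<le> 2 * I"
    using le_twice lam_part by (intro has_integral_le[OF abs_S_has_integral twice_I]) simp
  then show "integral {0..1} (\<lambda>x. \<bar>S x\<bar>) \<le> 4 * n * R" using I_le by linarith
  have "sqrt (n * lam) \<le> 2 * I"
    using has_integral_ge_const[OF twice_I, of "sqrt (n * lam)"] le_twice lam_part by simp
  then have "sqrt (n * lam) \<le> 4 * n * R" using I_le by linarith
  from power_mono[OF this real_sqrt_ge_zero[OF lam_part], of 2]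
  show "n * lam \<le> (4 * n * R)\<^sup>2" using lam_part by simp
qed

lemma bounds_if_lam_neg:
  assumes "lam < 0"
  shows "integral {0..1} (\<lambda>x. \<bar>S x\<bar>) \<le> n * R" and "- (n * lam) \<le> (n * R)\<^sup>2"
proof -
  have pos: "0 < - (n * lam)" using assms n_ge_2 by (simp add: mult_pos_neg)
  have S_sq_ge: "- (n * lam) \<le> (S x)\<^sup>2" if "x \<in> {0..1}" for x
    using energy_nonneg[OF that] by linarith
  have "(\<forall>x\<in>{0..1}. 0 < S x) \<or> (\<forall>x\<in>{0..1}. S x < 0)"
    using S_sq_ge pos by (intro continuous_nonvanishing_imp_constant_sign continuous_on_S) force
  then have "((\<lambda>x. \<bar>S x\<bar>) has_integral \<bar>\<Sum>k\<in>A. D k\<bar>) {0..1}"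
    by (intro has_integral_abs_of_constant_sign S_has_integral) (auto simp: less_imp_le)
  then have int_eq: "integral {0..1} (\<lambda>x. \<bar>S x\<bar>) = \<bar>\<Sum>k\<in>A. D k\<bar>"
    by (rule integral_unique)
  then show "integral {0..1} (\<lambda>x. \<bar>S x\<bar>) \<le> n * R" using abs_sum_D_le by simp
  have "sqrt (- (n * lam)) \<le> \<bar>S x\<bar>" if "x \<in> {0..1}" for x
    using real_sqrt_le_mono[OF S_sq_ge[OF that]] by simp
  then have "sqrt (- (n * lam)) \<le> n * R"
    using has_integral_ge_const[OF abs_S_has_integral, of "sqrt (- (n * lam))"] int_eq abs_sum_D_le
    by simp
  from power_mono[OF this real_sqrt_ge_zero, of 2]
  show "- (n * lam) \<le> (n * R)\<^sup>2" using pos by simp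
qed

definition C :: real where "C = 4 * n * R"

lemma integral_abs_S_le: "integral {0..1} (\<lambda>x. \<bar>S x\<bar>) \<le> C"
proof (cases "0 \<le> lam")
  case True
  then show ?thesis using bounds_if_lam_nonneg(1) by (simp add: C_def)
next
  case False
  have "0 \<le> n * R" using R_nonneg by simp
  then show ?thesis using False bounds_if_lam_neg(1) by (simp add: C_def)
qed

lemma n_abs_lam_le: "n * \<bar>lam\<bar> \<le> C\<^sup>2"
proof (cases "0 \<le> lam")
  case True
  then show ?thesis using bounds_if_lam_nonneg(2) by (simp add: C_def)
next
  case False
  have "(n * R)\<^sup>2 \<le> (4 * n * R)\<^sup>2"
    using R_nonneg n_ge_2 by (intro power_mono) auto
  then show ?thesis using False bounds_if_lam_neg(2) by (simp add: C_def)
qed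

lemma exists_abs_S_le_C:
  obtains x0 where "x0 \<in> {0..1}" and "\<bar>S x0\<bar> \<le> C"
proof -
  obtain x0 where x0: "x0 \<in> {0..1}" and min: "\<And>y. y \<in> {0..1} \<Longrightarrow> \<bar>S x0\<bar> \<le> \<bar>S y\<bar>"
    using continuous_attains_inf[OF compact_Icc _ continuous_on_rabs[OF continuous_on_S]] by auto
  have "\<bar>S x0\<bar> \<le> integral {0..1} (\<lambda>x. \<bar>S x\<bar>)"
    using has_integral_ge_const[OF abs_S_has_integral, of "\<bar>S x0\<bar>"] min by simp
  with x0 integral_abs_S_le show thesis by (intro that) auto
qed

lemma ln_energy_diff_le:
  assumes x: "x \<in> {0..1}" and y: "y \<in> {0..1}"
  shows "ln (C\<^sup>2 + 1 + (S x)\<^sup>2) - ln (C\<^sup>2 + 1 + (S y)\<^sup>2) \<le> 2 * C"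
proof -
  define b where "b = C\<^sup>2 + 1"
  have pos: "0 < b + (S t)\<^sup>2" for t
    unfolding b_def using zero_le_power2[of C] zero_le_power2[of "S t"] by linarith
  have deriv: "((\<lambda>t. ln (b + (S t)\<^sup>2)) has_real_derivative
      2 * S t * (- (S t)\<^sup>2 - n * lam) / (b + (S t)\<^sup>2)) (at t within {0..1})"
    if t: "t \<in> {0..1}" for t
  proof -
    have "((\<lambda>t. b + (S t)\<^sup>2) has_real_derivative 0 + 2 * S t * (- (S t)\<^sup>2 - n * lam)) (at t within {0..1})"
      using DERIV_add[OF DERIV_const DERIV_power[OF S_deriv[OF t], of 2]] by (simp add: ac_simps)
    from DERIV_chain2[OF DERIV_ln_divide[OF pos] this] show ?thesis by simp
  qed
  have bound: "\<bar>2 * S t * (- (S t)\<^sup>2 - n * lam) / (b + (S t)\<^sup>2)\<bar> \<le> 2 * \<bar>S t\<bar>"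
    if t: "t \<in> {0..1}" for t
  proof -
    have "n * lam \<le> C\<^sup>2" using n_abs_lam_le abs_ge_self[of lam] n_ge_2
      by (smt (verit) mult_left_mono)
    then have "(S t)\<^sup>2 + n * lam \<le> b + (S t)\<^sup>2" by (simp add: b_def)
    define q where "q = ((S t)\<^sup>2 + n * lam) / (b + (S t)\<^sup>2)"
    have "q \<le> 1" using pos[of t] \<open>(S t)\<^sup>2 + n * lam \<le> b + (S t)\<^sup>2\<close> by (simp add: q_def)
    moreover have "0 \<le> q" using energy_nonneg[OF t] pos[of t] by (simp add: q_def)
    moreover have "2 * S t * (- (S t)\<^sup>2 - n * lam) / (b + (S t)\<^sup>2) = - (2 * S t * q)"
      by (simp add: q_def minus_divide_left algebra_simps)
    ultimately show ?thesis using mult_left_le[of q "2 * \<bar>S t\<bar>"] by (simp add: abs_mult)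
  qed
  have "ln (b + (S x)\<^sup>2) - ln (b + (S y)\<^sup>2) \<le> integral {0..1} (\<lambda>t. 2 * \<bar>S t\<bar>)"
    using continuous_on_S
    by (intro diff_le_integral_of_abs_deriv_le[OF deriv bound _ x y] continuous_intros) auto
  also have "\<dots> \<le> 2 * C" using integral_abs_S_le by simp
  finally show ?thesis by (simp add: b_def)
qed

lemma power2_S_le:
  assumes "x \<in> {0..1}"
  shows "(S x)\<^sup>2 \<le> (2 * C\<^sup>2 + 1) * exp (2 * C)"
proof -
  obtain x0 where x0: "x0 \<in> {0..1}" and S_x0: "\<bar>S x0\<bar> \<le> C" by (rule exists_abs_S_le_C)
  have pos: "0 < C\<^sup>2 + 1 + (S t)\<^sup>2" for t
    using zero_le_power2[of C] zero_le_power2[of "S t"] by linarith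
  have "C\<^sup>2 + 1 + (S x)\<^sup>2 = exp (ln (C\<^sup>2 + 1 + (S x)\<^sup>2))" using pos by simp
  also have "\<dots> \<le> exp (ln (C\<^sup>2 + 1 + (S x0)\<^sup>2) + 2 * C)"
    using ln_energy_diff_le[OF assms x0] by simp
  also have "\<dots> = (C\<^sup>2 + 1 + (S x0)\<^sup>2) * exp (2 * C)" using pos by (simp add: exp_add)
  also have "\<dots> \<le> (2 * C\<^sup>2 + 1) * exp (2 * C)"
    using power_mono[OF S_x0 abs_ge_zero, of 2] by simp
  finally show ?thesis by (smt (verit) zero_le_power2)
qed

lemma abs_lam_le: "\<bar>lam\<bar> \<le> C\<^sup>2"
  using n_abs_lam_le mult_right_mono[of 1 n "\<bar>lam\<bar>"] n_ge_2 by simp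

lemma abs_L_le:
  assumes "i \<in> A" "x \<in> {0..1}"
  shows "\<bar>L i x\<bar> \<le> sqrt ((2 * C\<^sup>2 + 1) * exp (2 * C) + C\<^sup>2)"
proof -
  have "(n - 1) * lam \<le> n * \<bar>lam\<bar>"
    using n_ge_2 by (smt (verit) abs_ge_self mult_left_mono mult_right_mono abs_ge_zero)
  then have "(L i x)\<^sup>2 \<le> (2 * C\<^sup>2 + 1) * exp (2 * C) + C\<^sup>2"
    using member_le_sum[of i A "\<lambda>k. (L k x)\<^sup>2"] assms finite_A sum_power2_L_eq[OF assms(2)]
      power2_S_le[OF assms(2)] n_abs_lam_le by simp
  then have "sqrt ((L i x)\<^sup>2) \<le> sqrt ((2 * C\<^sup>2 + 1) * exp (2 * C) + C\<^sup>2)"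
    by (rule real_sqrt_le_mono)
  then show ?thesis by simp
qed

end

theorem lemma3p7:
  fixes d :: nat and R :: real
  assumes "d \<ge> 2" and "R > 0"
  shows "\<exists>R' > 0. \<forall>(Ds :: nat \<Rightarrow> real) (lam :: real) (L :: nat \<Rightarrow> real \<Rightarrow> real).
           (\<forall>i\<in>{1..d}. \<bar>Ds i\<bar> \<le> R)
         \<and> real (d - 1) * lam = (\<Sum>i=1..d. (L i 0)\<^sup>2) - (\<Sum>i=1..d. L i 0)\<^sup>2
         \<and> (\<forall>i\<in>{1..d}. \<forall>x\<in>{0..1}.
               (L i has_real_derivative (- (\<Sum>k=1..d. L k x) * L i x - lam)) (at x within {0..1}))
         \<and> (\<forall>i\<in>{1..d}. continuous_on {0..1} (\<lambda>x. - (\<Sum>k=1..d. L k x) * L i x - lam))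
         \<and> (\<forall>i\<in>{1..d}. (L i has_integral Ds i) {0..1})
         \<longrightarrow> \<bar>lam\<bar> < R' \<and> (\<forall>r\<in>{0..1}. \<forall>i\<in>{1..d}. \<bar>L i r\<bar> < R')"
proof -
  define K where "K = 4 * real d * R"
  define M where "M = sqrt ((2 * K\<^sup>2 + 1) * exp (2 * K) + K\<^sup>2)"
  have "0 \<le> M" by (simp add: M_def)
  show ?thesis
  proof (rule exI[of _ "M + K\<^sup>2 + 1"], rule conjI, goal_cases)
    case 1
    show ?case using \<open>0 \<le> M\<close> by (simp add: add_nonneg_pos)
  next
    case 2
    show ?case
    proof (intro allI impI, goal_cases)
      case (1 Ds lam L)
      then interpret bvp: riccati_bvp "{1..d}" lam L Ds R
        using \<open>d \<ge> 2\<close> by unfold_locales (auto simp: of_nat_diff)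
      have "bvp.C = K" unfolding bvp.C_def K_def by simp
      then have lam: "\<bar>lam\<bar> \<le> K\<^sup>2" and L: "\<forall>r\<in>{0..1}. \<forall>i\<in>{1..d}. \<bar>L i r\<bar> \<le> M"
        using bvp.abs_lam_le bvp.abs_L_le by (auto simp: M_def)
      show ?case
      proof (intro conjI ballI)
        show "\<bar>lam\<bar> < M + K\<^sup>2 + 1" using lam \<open>0 \<le> M\<close> by linarith
        fix r :: real and i assume "r \<in> {0..1}" "i \<in> {1..d}"
        with L have "\<bar>L i r\<bar> \<le> M" by blast
        then show "\<bar>L i r\<bar> < M + K\<^sup>2 + 1" using zero_le_power2[of K] by linarith
      qed
    qed
  qed
qed

end
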